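(* Let $\psi$ be a CNF formula with only positive literals, with clauses $C_1,\dots,C_m$ each consisting of three distinct variables, and variables $x_1,\dots,x_p$, in which every variable appears in at least $3$ clauses. Let $G$ be the graph constructed as follows: (1) for each variable $x_i$ create a cycle $D_i$ whose number of vertices equals the number of clauses containing $x_i$, and, for each clause containing $x_i$, designate a distinct vertex of $D_i$ as corresponding to that clause; (2) add a vertex $a$ adjacent to every vertex of all cycles $D_1,\dots,D_p$; (3) subdivide every edge of the cycles and every edge incident to $a$ exactly twice (replacing it by a path with three edges); (4) for each clause $C_i=\{x_j,x_k,x_\ell\}$ add a triangle on new vertices $u_{ij},u_{ik},u_{i\ell}$ and make $u_{ij}$ adjacent to the vertex of $D_j$ corresponding to $C_i$, $u_{ik}$ adjacent to the vertex of $D_k$ corresponding to $C_i$, and $u_{i\ell}$ adjacent to the vertex of $D_\ell$ corresponding to $C_i$. If $\psi$ has an assignment in which every clause contains exactly one true variable, then $G$ has a $1$-shallow topological minor of density $\frac{5m}{2m+1}$.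
   Context: A graph $H$ is a $1$-shallow topological minor of $G$ if some graph obtained from $H$ by subdividing each edge at most twice is isomorphic to a subgraph of $G$. The density of $H$ is $\|H\|/|H|$ (number of edges divided by number of vertices). *)

theory Defs
  imports Main "HOL.Real"
begin

type_synonym 'a graph = "'a set \<times> 'a set set"

definition verts :: "'a graph \<Rightarrow> 'a set" where "verts G = fst G"
definition edges :: "'a graph \<Rightarrow> 'a set set" where "edges G = snd G"

definition simple_graph :: "'a graph \<Rightarrow> bool" where
  "simple_graph G \<longleftrightarrow> finite (verts G) \<and>
     (\<forall>e\<in>edges G. \<exists>u v. e = {u, v} \<and> u \<noteq> v \<and> u \<in> verts G \<and> v \<in> verts G)"

definition density :: "'a graph \<Rightarrow> real" where
  "density G = real (card (edges G)) / real (card (verts G))"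

definition is_path :: "'a graph \<Rightarrow> 'a list \<Rightarrow> bool" where
  "is_path G P \<longleftrightarrow> P \<noteq> [] \<and> distinct P \<and> set P \<subseteq> verts G \<and>
     (\<forall>k. Suc k < length P \<longrightarrow> {P ! k, P ! Suc k} \<in> edges G)"

definition inner :: "'a list \<Rightarrow> 'a set" where
  "inner P = set (butlast (tl P))"

text \<open>H is a 1-shallow topological minor of G: some graph obtained from H by subdividing
  each edge at most twice is isomorphic to a subgraph of G.\<close>
definition shallow_top_minor1 :: "'b graph \<Rightarrow> 'a graph \<Rightarrow> bool" where
  "shallow_top_minor1 H G \<longleftrightarrow> simple_graph H \<and>
     (\<exists>(f :: 'b \<Rightarrow> 'a) (P :: 'b set \<Rightarrow> 'a list).
        inj_on f (verts H) \<and> f ` verts H \<subseteq> verts G \<and>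
        (\<forall>e\<in>edges H. is_path G (P e) \<and> 2 \<le> length (P e) \<and> length (P e) \<le> 4 \<and>
            (\<exists>u v. e = {u, v} \<and> hd (P e) = f u \<and> last (P e) = f v) \<and>
            inner (P e) \<inter> f ` verts H = {}) \<and>
        (\<forall>e\<in>edges H. \<forall>e'\<in>edges H. e \<noteq> e' \<longrightarrow> inner (P e) \<inter> inner (P e') = {}))"

text \<open>The CNF formula: clauses 0..<m, variables 0..<p, clause i is the set C i of
  (positive) variables it contains.\<close>

definition occ :: "nat \<Rightarrow> (nat \<Rightarrow> nat set) \<Rightarrow> nat \<Rightarrow> nat set" where
  "occ m C j = {i. i < m \<and> j \<in> C i}"

text \<open>nxt j is a cyclic arrangement of the clauses containing x_j: the cycle D_j has one
  vertex per clause containing x_j, and clause i is followed on D_j by clause nxt j i.\<close>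
definition cyclic_order :: "nat \<Rightarrow> nat \<Rightarrow> (nat \<Rightarrow> nat set) \<Rightarrow> (nat \<Rightarrow> nat \<Rightarrow> nat) \<Rightarrow> bool" where
  "cyclic_order m p C nxt \<longleftrightarrow> (\<forall>j<p. bij_betw (nxt j) (occ m C j) (occ m C j) \<and>
      (\<forall>i\<in>occ m C j. \<forall>i'\<in>occ m C j. \<exists>k. (nxt j ^^ k) i = i'))"

datatype vtx =
    Cyc nat nat        (* Cyc i j: vertex of D_j corresponding to clause C_i *)
  | Apex
  | SubC nat nat nat   (* SubC i j k: k-th subdivision vertex of the cycle edge of D_j leaving Cyc i j *)
  | SubA nat nat nat   (* SubA i j k: k-th subdivision vertex of the edge a -- Cyc i j *)
  | U nat nat

definition constr_graph :: "nat \<Rightarrow> (nat \<Rightarrow> nat set) \<Rightarrow> (nat \<Rightarrow> nat \<Rightarrow> nat) \<Rightarrow> vtx graph" where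
  "constr_graph m C nxt =
    ({Apex} \<union> {Cyc i j | i j. i < m \<and> j \<in> C i}
       \<union> {SubC i j k | i j k. i < m \<and> j \<in> C i \<and> k < 2}
       \<union> {SubA i j k | i j k. i < m \<and> j \<in> C i \<and> k < 2}
       \<union> {U i j | i j. i < m \<and> j \<in> C i},
     {{Cyc i j, SubC i j 0} | i j. i < m \<and> j \<in> C i}
       \<union> {{SubC i j 0, SubC i j 1} | i j. i < m \<and> j \<in> C i}
       \<union> {{SubC i j 1, Cyc (nxt j i) j} | i j. i < m \<and> j \<in> C i}
       \<union> {{Apex, SubA i j 0} | i j. i < m \<and> j \<in> C i}
       \<union> {{SubA i j 0, SubA i j 1} | i j. i < m \<and> j \<in> C i}
       \<union> {{SubA i j 1, Cyc i j} | i j. i < m \<and> j \<in> C i}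
       \<union> {{U i j, U i k} | i j k. i < m \<and> j \<in> C i \<and> k \<in> C i \<and> j \<noteq> k}
       \<union> {{U i j, Cyc i j} | i j. i < m \<and> j \<in> C i})"

end

theory Submission
  imports Defs
begin

text \<open>Fix an exact-one assignment T and keep, in each clause, the two occurrences of false
  variables. The branch vertices are the apex a and the 2m cycle vertices of these false
  occurrences. Every false occurrence contributes a path to a (through the subdivided apex
  edge) and a path to its successor on its cycle, which is again a false occurrence because
  the whole cycle of a false variable is kept; every clause contributes the path through its
  triangle joining its two false occurrences. These 5m paths have length 3, are internally
  disjoint and have distinct endpoint pairs (cycles have length at least 3), so they form a
  1-shallow topological minor with 5m edges on 2m + 1 vertices.\<close>

lemma hd_neq_last_if_distinct:
  assumes "distinct xs" "2 \<le> length xs"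
  shows "hd xs \<noteq> last xs"
  using assms by (cases xs) (auto simp: last_conv_nth)

lemma shallow_top_minor1_of_paths:
  fixes G :: "'a graph" and V :: "'a set" and Ps :: "'a list set"
  assumes "finite V" "V \<subseteq> verts G"
    and path: "\<And>L. L \<in> Ps \<Longrightarrow> is_path G L"
    and short: "\<And>L. L \<in> Ps \<Longrightarrow> 2 \<le> length L \<and> length L \<le> 4"
    and ends: "\<And>L. L \<in> Ps \<Longrightarrow> hd L \<in> V \<and> last L \<in> V"
    and inner_free: "\<And>L. L \<in> Ps \<Longrightarrow> inner L \<inter> V = {}"
    and disjoint: "\<And>L L'. L \<in> Ps \<Longrightarrow> L' \<in> Ps \<Longrightarrow> L \<noteq> L' \<Longrightarrow> inner L \<inter> inner L' = {}"
  shows "shallow_top_minor1 (V, (\<lambda>L. {hd L, last L}) ` Ps) G"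
proof -
  define H where "H = (V, (\<lambda>L. {hd L, last L}) ` Ps)"
  define P where "P e = (SOME L. L \<in> Ps \<and> {hd L, last L} = e)" for e
  have P: "P e \<in> Ps \<and> {hd (P e), last (P e)} = e" if "e \<in> edges H" for e
    unfolding P_def by (rule someI_ex) (use that in \<open>auto simp: H_def edges_def\<close>)
  have "simple_graph H"
    unfolding simple_graph_def H_def verts_def edges_def
    using assms(1) ends path short hd_neq_last_if_distinct unfolding is_path_def by fastforce
  moreover have "\<forall>e\<in>edges H. is_path G (P e) \<and> 2 \<le> length (P e) \<and> length (P e) \<le> 4 \<and>
      (\<exists>u v. e = {u, v} \<and> hd (P e) = id u \<and> last (P e) = id v) \<and>
      inner (P e) \<inter> id ` verts H = {}"
    using P path short inner_free by (fastforce simp: H_def verts_def)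
  moreover have "\<forall>e\<in>edges H. \<forall>e'\<in>edges H. e \<noteq> e' \<longrightarrow> inner (P e) \<inter> inner (P e') = {}"
    using P disjoint by metis
  moreover have "id ` verts H \<subseteq> verts G"
    using assms(2) by (simp add: H_def verts_def)
  ultimately show ?thesis
    unfolding shallow_top_minor1_def H_def[symmetric] by (intro conjI exI) auto
qed

lemma card_le_period_if_orbit:
  assumes "0 < n" "(f ^^ n) x = x" and orbit: "\<forall>y\<in>S. \<exists>k. (f ^^ k) x = y"
  shows "card S \<le> n"
proof -
  have "S \<subseteq> (\<lambda>k. (f ^^ k) x) ` {..<n}"
  proof
    fix y assume "y \<in> S"
    then obtain k where "(f ^^ k) x = y" using orbit by blast
    then have "y = (f ^^ (k mod n)) x" using funpow_mod_eq[OF assms(2)] by simp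
    then show "y \<in> (\<lambda>k. (f ^^ k) x) ` {..<n}" using \<open>0 < n\<close> by auto
  qed
  then have "card S \<le> card ((\<lambda>k. (f ^^ k) x) ` {..<n})" by (intro card_mono) simp_all
  also have "\<dots> \<le> n" using card_image_le[of "{..<n}"] by simp
  finally show ?thesis .
qed

lemma cyclic_order_nxt:
  assumes "cyclic_order m p C nxt" "j < p" "card (occ m C j) \<ge> 3" "i \<in> occ m C j"
  shows "nxt j i \<in> occ m C j" "nxt j i \<noteq> i" "nxt j (nxt j i) \<noteq> i"
proof -
  have bij: "bij_betw (nxt j) (occ m C j) (occ m C j)"
    and orbit: "\<forall>i'\<in>occ m C j. \<exists>k. (nxt j ^^ k) i = i'"
    using assms unfolding cyclic_order_def by auto
  show "nxt j i \<in> occ m C j" using bij assms(4) bij_betwE by blast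
  show "nxt j i \<noteq> i"
    using card_le_period_if_orbit[of 1 "nxt j" i, OF _ _ orbit] assms(3) by auto
  show "nxt j (nxt j i) \<noteq> i"
    using card_le_period_if_orbit[of 2 "nxt j" i, OF _ _ orbit] assms(3)
    by (auto simp: numeral_2_eq_2)
qed

lemma is_path_four_vertices:
  assumes "distinct [a, b, c, d]" "{a, b, c, d} \<subseteq> verts G"
    and "{a, b} \<in> edges G" "{b, c} \<in> edges G" "{c, d} \<in> edges G"
  shows "is_path G [a, b, c, d]"
  unfolding is_path_def
proof (intro conjI allI impI)
  fix k assume "Suc k < length [a, b, c, d]"
  then have "k = 0 \<or> k = 1 \<or> k = 2" by auto
  then show "{[a, b, c, d] ! k, [a, b, c, d] ! Suc k} \<in> edges G" using assms by auto
qed (use assms in auto)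

locale exact_one_in_three =
  fixes m p :: nat and C :: "nat \<Rightarrow> nat set" and nxt :: "nat \<Rightarrow> nat \<Rightarrow> nat" and T :: "nat set"
  assumes clauses: "\<forall>i<m. C i \<subseteq> {..<p} \<and> card (C i) = 3"
    and occurs: "\<forall>j<p. card (occ m C j) \<ge> 3"
    and cyc: "cyclic_order m p C nxt"
    and exactly_one: "\<forall>i<m. card (C i \<inter> T) = 1"
begin

definition false_occs :: "(nat \<times> nat) set" where
  "false_occs = Sigma {..<m} (\<lambda>i. C i - T)"

definition false_var1 :: "nat \<Rightarrow> nat" where "false_var1 i = Min (C i - T)"
definition false_var2 :: "nat \<Rightarrow> nat" where "false_var2 i = Max (C i - T)"

definition apex_path :: "nat \<Rightarrow> nat \<Rightarrow> vtx list" where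
  "apex_path i j = [Apex, SubA i j 0, SubA i j 1, Cyc i j]"

definition cycle_path :: "nat \<Rightarrow> nat \<Rightarrow> vtx list" where
  "cycle_path i j = [Cyc i j, SubC i j 0, SubC i j 1, Cyc (nxt j i) j]"

definition clause_path :: "nat \<Rightarrow> vtx list" where
  "clause_path i = [Cyc i (false_var1 i), U i (false_var1 i), U i (false_var2 i), Cyc i (false_var2 i)]"

definition paths :: "vtx list set" where
  "paths = case_prod apex_path ` false_occs \<union> case_prod cycle_path ` false_occs
     \<union> clause_path ` {..<m}"

definition branch_verts :: "vtx set" where
  "branch_verts = insert Apex (case_prod Cyc ` false_occs)"

lemma finite_clause: "i < m \<Longrightarrow> finite (C i)"
  using clauses card.infinite by fastforce

lemma card_false_vars: "i < m \<Longrightarrow> card (C i - T) = 2"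
  using card_Diff_subset_Int[of "C i" T] finite_clause exactly_one clauses by auto

lemma false_vars:
  assumes "i < m"
  shows "false_var1 i \<in> C i - T" "false_var2 i \<in> C i - T" "false_var1 i \<noteq> false_var2 i"
proof -
  obtain a b where "C i - T = {a, b}" "a \<noteq> b"
    using card_false_vars[OF assms] card_2_iff by metis
  then show "false_var1 i \<in> C i - T" "false_var2 i \<in> C i - T" "false_var1 i \<noteq> false_var2 i"
    unfolding false_var1_def false_var2_def by (auto simp: min_def max_def)
qed

lemma finite_false_occs: "finite false_occs"
  unfolding false_occs_def using finite_clause by auto

lemma card_false_occs: "card false_occs = 2 * m"
  unfolding false_occs_def by (subst card_SigmaI) (use finite_clause card_false_vars in auto)

lemma false_occs_nxt:
  assumes "(i, j) \<in> false_occs"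
  shows "(nxt j i, j) \<in> false_occs" "nxt j i \<noteq> i" "nxt j (nxt j i) \<noteq> i"
proof -
  have "j < p" "i \<in> occ m C j"
    using assms clauses unfolding false_occs_def occ_def by auto
  note nxt = cyclic_order_nxt[OF cyc this(1) _ this(2)]
  have "card (occ m C j) \<ge> 3" using occurs \<open>j < p\<close> by auto
  then show "(nxt j i, j) \<in> false_occs" "nxt j i \<noteq> i" "nxt j (nxt j i) \<noteq> i"
    using nxt assms unfolding false_occs_def occ_def by auto
qed

lemma paths_cases:
  assumes "L \<in> paths"
  obtains (apex) i j where "(i, j) \<in> false_occs" "L = apex_path i j"
    | (cycle) i j where "(i, j) \<in> false_occs" "L = cycle_path i j"
    | (clause) i where "i < m" "L = clause_path i"
  using assms unfolding paths_def by auto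

lemma is_path_paths:
  assumes "L \<in> paths"
  shows "is_path (constr_graph m C nxt) L"
  using assms
proof (cases rule: paths_cases)
  case (apex i j)
  then show ?thesis unfolding apex(2) apex_path_def false_occs_def
    by (intro is_path_four_vertices) (auto simp: constr_graph_def verts_def edges_def)
next
  case (cycle i j)
  with false_occs_nxt[OF cycle(1)] show ?thesis unfolding cycle(2) cycle_path_def false_occs_def
    by (intro is_path_four_vertices) (auto simp: constr_graph_def verts_def edges_def)
next
  case (clause i)
  with false_vars[OF clause(1)] show ?thesis unfolding clause(2) clause_path_def
    by (intro is_path_four_vertices) (auto simp: constr_graph_def verts_def edges_def)
qed

lemma path_ends_branch_verts:
  assumes "L \<in> paths"
  shows "hd L \<in> branch_verts \<and> last L \<in> branch_verts \<and> inner L \<inter> branch_verts = {}"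
  using assms
proof (cases rule: paths_cases)
  case (cycle i j)
  with false_occs_nxt[OF cycle(1)] show ?thesis
    unfolding cycle_path_def branch_verts_def inner_def by auto
next
  case (clause i)
  with false_vars[OF clause(1)] show ?thesis
    unfolding clause_path_def branch_verts_def inner_def false_occs_def by auto
qed (auto simp: apex_path_def branch_verts_def inner_def)

lemma length_paths: "L \<in> paths \<Longrightarrow> length L = 4"
  by (erule paths_cases) (auto simp: apex_path_def cycle_path_def clause_path_def)

lemma paths_inner_disjoint:
  assumes "L \<in> paths" "L' \<in> paths" "L \<noteq> L'"
  shows "inner L \<inter> inner L' = {}"
  using assms(1)
  by (cases rule: paths_cases; use assms(2) in \<open>cases rule: paths_cases\<close>)
    (use assms(3) in \<open>auto simp: inner_def apex_path_def cycle_path_def clause_path_def\<close>)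

lemma inj_on_path_ends: "inj_on (\<lambda>L. {hd L, last L}) paths"
proof (rule inj_onI)
  fix L L' assume L: "L \<in> paths" and L': "L' \<in> paths" and ends: "{hd L, last L} = {hd L', last L'}"
  from L L' ends show "L = L'"
    by (cases rule: paths_cases; use L' in \<open>cases rule: paths_cases\<close>)
      (auto simp: apex_path_def cycle_path_def clause_path_def doubleton_eq_iff
        dest: false_occs_nxt false_vars)
qed

lemma card_paths: "card paths = 5 * m"
proof -
  have "card (case_prod apex_path ` false_occs) = 2 * m"
    using card_false_occs by (subst card_image) (auto simp: inj_on_def apex_path_def)
  moreover have "card (case_prod cycle_path ` false_occs) = 2 * m"
    using card_false_occs by (subst card_image) (auto simp: inj_on_def cycle_path_def)
  moreover have "card (clause_path ` {..<m}) = m"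
    by (subst card_image) (auto simp: inj_on_def clause_path_def)
  moreover have "case_prod apex_path ` false_occs \<inter> case_prod cycle_path ` false_occs = {}"
    "(case_prod apex_path ` false_occs \<union> case_prod cycle_path ` false_occs)
       \<inter> clause_path ` {..<m} = {}"
    by (auto simp: apex_path_def cycle_path_def clause_path_def)
  ultimately show ?thesis
    unfolding paths_def using finite_false_occs by (simp add: card_Un_disjoint)
qed

lemma card_branch_verts: "card branch_verts = 2 * m + 1"
proof -
  have "card (case_prod Cyc ` false_occs) = 2 * m"
    using card_false_occs by (subst card_image) (auto simp: inj_on_def)
  then show ?thesis
    unfolding branch_verts_def using finite_false_occs by (subst card_insert_disjoint) auto
qed

lemma branch_verts_subset: "branch_verts \<subseteq> verts (constr_graph m C nxt)"
  unfolding branch_verts_def false_occs_def constr_graph_def verts_def by auto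

end

theorem lemma4:
  fixes m p :: nat and C :: "nat \<Rightarrow> nat set" and nxt :: "nat \<Rightarrow> nat \<Rightarrow> nat"
  assumes clauses: "\<forall>i<m. C i \<subseteq> {..<p} \<and> card (C i) = 3"
    and occurs: "\<forall>j<p. card (occ m C j) \<ge> 3"
    and cyc: "cyclic_order m p C nxt"
    and x1sat: "\<exists>T \<subseteq> {..<p}. \<forall>i<m. card (C i \<inter> T) = 1"
  shows "\<exists>H :: vtx graph. shallow_top_minor1 H (constr_graph m C nxt) \<and>
           density H = real (5 * m) / real (2 * m + 1)"
proof -
  obtain T where "\<forall>i<m. card (C i \<inter> T) = 1" using x1sat by blast
  then interpret exact_one_in_three m p C nxt T
    using clauses occurs cyc by unfold_locales
  define H where "H = (branch_verts, (\<lambda>L. {hd L, last L}) ` paths)"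
  have "shallow_top_minor1 H (constr_graph m C nxt)"
    unfolding H_def
  proof (rule shallow_top_minor1_of_paths)
    show "finite branch_verts" unfolding branch_verts_def using finite_false_occs by simp
  qed (use branch_verts_subset is_path_paths length_paths path_ends_branch_verts
        paths_inner_disjoint in auto)
  moreover have "density H = real (5 * m) / real (2 * m + 1)"
    using card_image[OF inj_on_path_ends] card_paths card_branch_verts
    by (simp add: density_def H_def verts_def edges_def)
  ultimately show ?thesis by blast
qed

end
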